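(* Let $f:\{0,1\}^n\to\{0,1\}$ be an arbitrary symmetric Boolean function and let $\operatorname{alt}(f)$ be its alternation number. Then $\mathsf N(f)\ge\frac{\operatorname{alt}(f)}{2}$.
   Context: $\mathsf N(f)$ is the minimum degree of a real polynomial $p$ with $|p(x)|\le1/3$ whenever $f(x)=0$ and $|p(x)|\ge1$ whenever $f(x)=1$. $f$ is symmetric if its value depends only on the Hamming weight of the input. A monotone path is a sequence in $\{0,1\}^n$ where each next point is obtained by changing one coordinate from $0$ to $1$; its alternation number is the number of consecutive pairs on which $f$ changes value; $\operatorname{alt}(f)$ is the maximum alternation number over monotone paths from $0^n$ to $1^n$. *)

theory Defs
  imports Complex_Main
begin

text \<open>Points of the Boolean cube {0,1}^n are bool lists of length n (True = 1).\<close>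

definition cube_pt :: "bool list \<Rightarrow> nat \<Rightarrow> real" where
  "cube_pt x i = (if x ! i then 1 else 0)"

definition poly_deg_le :: "nat \<Rightarrow> nat \<Rightarrow> ((nat \<Rightarrow> real) \<Rightarrow> real) \<Rightarrow> bool" where
  "poly_deg_le n d p \<longleftrightarrow>
     (\<exists>M :: (nat \<Rightarrow> nat) set. \<exists>c :: (nat \<Rightarrow> nat) \<Rightarrow> real.
        finite M \<and> (\<forall>e\<in>M. (\<Sum>i<n. e i) \<le> d) \<and>
        (\<forall>y. p y = (\<Sum>e\<in>M. c e * (\<Prod>i<n. y i ^ e i))))"

definition symmetric_fun :: "nat \<Rightarrow> (bool list \<Rightarrow> bool) \<Rightarrow> bool" where
  "symmetric_fun n f \<longleftrightarrow>
     (\<forall>x y. length x = n \<longrightarrow> length y = n \<longrightarrow> count_list x True = count_list y True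
        \<longrightarrow> f x = f y)"

definition N_deg :: "nat \<Rightarrow> (bool list \<Rightarrow> bool) \<Rightarrow> nat" where
  "N_deg n f = (LEAST d. \<exists>p. poly_deg_le n d p \<and>
      (\<forall>x. length x = n \<longrightarrow>
         (\<not> f x \<longrightarrow> \<bar>p (cube_pt x)\<bar> \<le> 1/3) \<and> (f x \<longrightarrow> \<bar>p (cube_pt x)\<bar> \<ge> 1)))"

definition monotone_path :: "nat \<Rightarrow> (nat \<Rightarrow> bool list) \<Rightarrow> bool" where
  "monotone_path n P \<longleftrightarrow>
     P 0 = replicate n False \<and> P n = replicate n True \<and>
     (\<forall>k<n. \<exists>j<n. \<not> (P k ! j) \<and> P (Suc k) = (P k)[j := True])"

definition alt_num :: "(bool list \<Rightarrow> bool) \<Rightarrow> nat \<Rightarrow> (nat \<Rightarrow> bool list) \<Rightarrow> nat" where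
  "alt_num f n P = card {k. k < n \<and> f (P k) \<noteq> f (P (Suc k))}"

definition alt :: "nat \<Rightarrow> (bool list \<Rightarrow> bool) \<Rightarrow> nat" where
  "alt n f = Max {alt_num f n P | P. monotone_path n P}"

end

theory Submission
  imports Defs "HOL-Computational_Algebra.Polynomial"
begin

text \<open>Let p have degree d, with |p| \<le> 1/3 where f = 0 and |p| \<ge> 1 where f = 1. Then p^2 has
  degree 2d and is at most 1/9, resp. at least 1, on these sets. Averaging p^2 over the points of
  Hamming weight k (Minsky--Papert symmetrization) yields a univariate polynomial R of degree at
  most 2d, and since a symmetric f is constant on each weight, R(k) \<le> 1/9 or R(k) \<ge> 1 according
  to the value of f on weight k. For symmetric f, alt(f) is the number of k at which f changes
  between weights k and k + 1, and at each of them R - 1/2 changes sign on (k, k + 1); so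
  alt(f) \<le> deg R \<le> 2d. The least degree defining N(f) exists because f is interpolated exactly
  by a polynomial of degree n.\<close>

lemma poly_deg_le_const: "poly_deg_le n d (\<lambda>_. c)"
  unfolding poly_deg_le_def
  by (rule exI[of _ "{\<lambda>_. 0}"], rule exI[of _ "\<lambda>_. c"]) simp

lemma poly_deg_le_var:
  assumes "i < n"
  shows "poly_deg_le n 1 (\<lambda>y. y i)"
  unfolding poly_deg_le_def
proof (rule exI[of _ "{\<lambda>j. if j = i then 1 else 0}"], rule exI[of _ "\<lambda>_. 1"], intro conjI allI ballI)
  fix y :: "nat \<Rightarrow> real"
  have "(\<Prod>j<n. y j ^ (if j = i then 1 else 0)) = (\<Prod>j<n. if j = i then y j else 1)"
    by (rule prod.cong) auto
  also have "\<dots> = y i"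
    using assms by (simp add: prod.delta)
  finally show "y i = (\<Sum>e\<in>{\<lambda>j. if j = i then 1 else 0}. 1 * (\<Prod>j<n. y j ^ e j))"
    by simp
qed (use assms in \<open>auto simp: sum.delta\<close>)

lemma poly_deg_le_add:
  assumes "poly_deg_le n d p" "poly_deg_le n d q"
  shows "poly_deg_le n d (\<lambda>y. p y + q y)"
proof -
  obtain M1 c1 where M1: "finite M1" "\<forall>e\<in>M1. (\<Sum>i<n. e i) \<le> d"
    "\<forall>y. p y = (\<Sum>e\<in>M1. c1 e * (\<Prod>i<n. y i ^ e i))"
    using assms(1) unfolding poly_deg_le_def by blast
  obtain M2 c2 where M2: "finite M2" "\<forall>e\<in>M2. (\<Sum>i<n. e i) \<le> d"
    "\<forall>y. q y = (\<Sum>e\<in>M2. c2 e * (\<Prod>i<n. y i ^ e i))"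
    using assms(2) unfolding poly_deg_le_def by blast
  define c where "c e = (if e \<in> M1 then c1 e else 0) + (if e \<in> M2 then c2 e else 0)" for e
  show ?thesis
    unfolding poly_deg_le_def
  proof (rule exI[of _ "M1 \<union> M2"], rule exI[of _ c], intro conjI allI)
    fix y :: "nat \<Rightarrow> real"
    let ?m = "\<lambda>e. \<Prod>i<n. y i ^ e i"
    have "(\<Sum>e\<in>M1 \<union> M2. c e * ?m e) = (\<Sum>e\<in>M1 \<union> M2. if e \<in> M1 then c1 e * ?m e else 0)
        + (\<Sum>e\<in>M1 \<union> M2. if e \<in> M2 then c2 e * ?m e else 0)"
      unfolding sum.distrib[symmetric] by (rule sum.cong) (auto simp: c_def algebra_simps)
    also have "\<dots> = (\<Sum>e\<in>M1. c1 e * ?m e) + (\<Sum>e\<in>M2. c2 e * ?m e)"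
      using M1(1) M2(1) by (simp add: sum.inter_restrict[symmetric] Int_absorb1 Int_absorb2)
    finally show "p y + q y = (\<Sum>e\<in>M1 \<union> M2. c e * ?m e)"
      using M1(3) M2(3) by simp
  qed (use M1 M2 in auto)
qed

text \<open>Monomials multiply by adding exponent vectors; the coefficient of a product monomial
  collects all pairs of monomials adding up to it.\<close>

lemma poly_deg_le_mult:
  assumes "poly_deg_le n a p" "poly_deg_le n b q"
  shows "poly_deg_le n (a + b) (\<lambda>y. p y * q y)"
proof -
  obtain M1 c1 where M1: "finite M1" "\<forall>e\<in>M1. (\<Sum>i<n. e i) \<le> a"
    "\<forall>y. p y = (\<Sum>e\<in>M1. c1 e * (\<Prod>i<n. y i ^ e i))"
    using assms(1) unfolding poly_deg_le_def by blast
  obtain M2 c2 where M2: "finite M2" "\<forall>e\<in>M2. (\<Sum>i<n. e i) \<le> b"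
    "\<forall>y. q y = (\<Sum>e\<in>M2. c2 e * (\<Prod>i<n. y i ^ e i))"
    using assms(2) unfolding poly_deg_le_def by blast
  define g where "g = (\<lambda>(u :: nat \<Rightarrow> nat, v :: nat \<Rightarrow> nat) i. u i + v i)"
  define M where "M = g ` (M1 \<times> M2)"
  define c where "c e = (\<Sum>uv\<in>{uv \<in> M1 \<times> M2. g uv = e}. c1 (fst uv) * c2 (snd uv))" for e
  show ?thesis
    unfolding poly_deg_le_def
  proof (rule exI[of _ M], rule exI[of _ c], intro conjI allI ballI)
    show "finite M"
      unfolding M_def using M1(1) M2(1) by simp
  next
    fix e assume "e \<in> M"
    then obtain u v where uv: "u \<in> M1" "v \<in> M2" "e = g (u, v)"
      unfolding M_def by auto
    have "(\<Sum>i<n. e i) = (\<Sum>i<n. u i) + (\<Sum>i<n. v i)"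
      unfolding uv g_def by (simp add: sum.distrib)
    then show "(\<Sum>i<n. e i) \<le> a + b"
      using M1(2) M2(2) uv by fastforce
  next
    fix y :: "nat \<Rightarrow> real"
    let ?m = "\<lambda>e. \<Prod>i<n. y i ^ e i"
    have m_g: "?m (g uv) = ?m (fst uv) * ?m (snd uv)" for uv
      unfolding g_def by (cases uv) (simp add: power_add prod.distrib)
    have "p y * q y = (\<Sum>u\<in>M1. \<Sum>v\<in>M2. (c1 u * ?m u) * (c2 v * ?m v))"
      using M1(3) M2(3) by (simp add: sum_product)
    also have "\<dots> = (\<Sum>uv\<in>M1 \<times> M2. c1 (fst uv) * c2 (snd uv) * ?m (g uv))"
      by (simp add: sum.cartesian_product m_g algebra_simps case_prod_beta)
    also have "\<dots> = (\<Sum>e\<in>M. \<Sum>uv\<in>{uv \<in> M1 \<times> M2. g uv = e}. c1 (fst uv) * c2 (snd uv) * ?m (g uv))"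
      unfolding M_def using M1(1) M2(1) by (intro sum.group[symmetric]) auto
    also have "\<dots> = (\<Sum>e\<in>M. c e * ?m e)"
      unfolding c_def sum_distrib_right by (rule sum.cong) auto
    finally show "p y * q y = (\<Sum>e\<in>M. c e * ?m e)" .
  qed
qed

lemma poly_deg_le_scale:
  assumes "poly_deg_le n d p"
  shows "poly_deg_le n d (\<lambda>y. c * p y)"
  using poly_deg_le_mult[OF poly_deg_le_const[where c=c and d=0] assms] by simp

lemma poly_deg_le_affine:
  assumes "i < n"
  shows "poly_deg_le n 1 (\<lambda>y. a + b * y i)"
  by (rule poly_deg_le_add[OF poly_deg_le_const poly_deg_le_scale[OF poly_deg_le_var[OF assms]]])

lemma poly_deg_le_prod:
  assumes "finite I" "\<And>i. i \<in> I \<Longrightarrow> poly_deg_le n (d i) (p i)"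
  shows "poly_deg_le n (\<Sum>i\<in>I. d i) (\<lambda>y. \<Prod>i\<in>I. p i y)"
  using assms
proof (induction I rule: finite_induct)
  case empty
  then show ?case by (simp add: poly_deg_le_const)
next
  case (insert j I)
  then show ?case
    using poly_deg_le_mult[of n "d j" "p j" "sum d I" "\<lambda>y. \<Prod>i\<in>I. p i y"] by simp
qed

lemma poly_deg_le_sum:
  assumes "finite I" "\<And>i. i \<in> I \<Longrightarrow> poly_deg_le n d (p i)"
  shows "poly_deg_le n d (\<lambda>y. \<Sum>i\<in>I. p i y)"
  using assms
proof (induction I rule: finite_induct)
  case empty
  then show ?case by (simp add: poly_deg_le_const)
next
  case (insert j I)
  then show ?case
    using poly_deg_le_add[of n d "p j" "\<lambda>y. \<Sum>i\<in>I. p i y"] by simp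
qed

definition cube_delta :: "nat \<Rightarrow> bool list \<Rightarrow> (nat \<Rightarrow> real) \<Rightarrow> real" where
  "cube_delta n x y = (\<Prod>i<n. if x ! i then y i else 1 - y i)"

lemma poly_deg_le_cube_delta: "poly_deg_le n n (cube_delta n x)"
proof -
  have "poly_deg_le n 1 (\<lambda>y. if x ! i then y i else 1 - y i)" if "i < n" for i
    using poly_deg_le_affine[OF that, of 0 1] poly_deg_le_affine[OF that, of 1 "-1"]
    by (cases "x ! i") simp_all
  then have "poly_deg_le n (\<Sum>i<n. 1) (cube_delta n x)"
    unfolding cube_delta_def by (intro poly_deg_le_prod) auto
  then show ?thesis by simp
qed

lemma cube_delta_cube_pt:
  assumes "length x = n" "length z = n"
  shows "cube_delta n x (cube_pt z) = (if x = z then 1 else 0)"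
proof (cases "x = z")
  case True
  have "(if z ! i then cube_pt z i else 1 - cube_pt z i) = 1" for i
    by (cases "z ! i") (simp_all add: cube_pt_def)
  then show ?thesis
    using True by (simp add: cube_delta_def)
next
  case False
  then obtain i where i: "i < n" "x ! i \<noteq> z ! i"
    using assms by (auto simp: list_eq_iff_nth_eq)
  have "cube_delta n x (cube_pt z) = 0"
    unfolding cube_delta_def using i by (intro prod_zero finite_lessThan bexI[of _ i]) (auto simp: cube_pt_def)
  then show ?thesis
    using False by simp
qed

lemma cube_interpolation:
  fixes g :: "bool list \<Rightarrow> real"
  shows "\<exists>p. poly_deg_le n n p \<and> (\<forall>x. length x = n \<longrightarrow> p (cube_pt x) = g x)"
proof -
  define C where "C = {x :: bool list. length x = n}"
  have "finite C"
    unfolding C_def using finite_lists_length_eq[of "UNIV :: bool set" n] by simp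
  define p where "p y = (\<Sum>x\<in>C. g x * cube_delta n x y)" for y
  have "poly_deg_le n n p"
    unfolding p_def using \<open>finite C\<close>
    by (intro poly_deg_le_sum poly_deg_le_scale poly_deg_le_cube_delta)
  moreover have "p (cube_pt z) = g z" if "length z = n" for z
  proof -
    have "p (cube_pt z) = (\<Sum>x\<in>C. if x = z then g x else 0)"
      unfolding p_def by (rule sum.cong) (auto simp: C_def cube_delta_cube_pt that)
    also have "\<dots> = g z"
      using \<open>finite C\<close> that by (simp add: C_def)
    finally show ?thesis .
  qed
  ultimately show ?thesis by blast
qed

definition nondet_approximates :: "nat \<Rightarrow> (bool list \<Rightarrow> bool) \<Rightarrow> ((nat \<Rightarrow> real) \<Rightarrow> real) \<Rightarrow> bool" where
  "nondet_approximates n f p \<longleftrightarrow>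
     (\<forall>x. length x = n \<longrightarrow>
        (\<not> f x \<longrightarrow> \<bar>p (cube_pt x)\<bar> \<le> 1/3) \<and> (f x \<longrightarrow> \<bar>p (cube_pt x)\<bar> \<ge> 1))"

lemma N_deg_Least: "N_deg n f = (LEAST d. \<exists>p. poly_deg_le n d p \<and> nondet_approximates n f p)"
  by (simp only: N_deg_def nondet_approximates_def)

lemma N_deg_witness:
  obtains p where "poly_deg_le n (N_deg n f) p" "nondet_approximates n f p"
proof -
  obtain p where p: "poly_deg_le n n p" "\<forall>x. length x = n \<longrightarrow> p (cube_pt x) = (if f x then 1 else 0)"
    using cube_interpolation[of n "\<lambda>x. if f x then 1 else 0"] by blast
  then have "nondet_approximates n f p"
    unfolding nondet_approximates_def by simp
  with p(1) have "\<exists>d p. poly_deg_le n d p \<and> nondet_approximates n f p"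
    by blast
  then have "\<exists>p. poly_deg_le n (N_deg n f) p \<and> nondet_approximates n f p"
    unfolding N_deg_Least by (rule LeastI_ex)
  then show ?thesis
    using that by blast
qed

definition indicator_pt :: "nat set \<Rightarrow> nat \<Rightarrow> bool list" where
  "indicator_pt T n = map (\<lambda>i. i \<in> T) [0..<n]"

lemma length_indicator_pt [simp]: "length (indicator_pt T n) = n"
  by (simp add: indicator_pt_def)

lemma nth_indicator_pt [simp]: "i < n \<Longrightarrow> indicator_pt T n ! i = (i \<in> T)"
  by (simp add: indicator_pt_def)

lemma count_list_True_eq_card: "count_list x True = card {i. i < length x \<and> x ! i}"
  by (simp add: count_list_eq_length_filter length_filter_conv_card)

lemma count_list_indicator_pt: "T \<subseteq> {..<n} \<Longrightarrow> count_list (indicator_pt T n) True = card T"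
  unfolding count_list_True_eq_card by (rule arg_cong[where f = card]) auto

lemma symmetric_fun_weight:
  assumes "symmetric_fun n f" "length x = n"
  shows "f x = f (indicator_pt {..<count_list x True} n)"
proof -
  have "count_list x True \<le> n"
    using assms(2) by (metis count_le_length)
  then show ?thesis
    using assms unfolding symmetric_fun_def
    by (metis lessThan_subset_iff count_list_indicator_pt length_indicator_pt card_lessThan)
qed

lemma monotone_path_weight:
  assumes "monotone_path n P" "k \<le> n"
  shows "length (P k) = n \<and> count_list (P k) True = k"
  using assms(2)
proof (induction k)
  case 0
  then show ?case
    using assms(1) unfolding monotone_path_def by (simp add: count_list_0_iff)
next
  case (Suc k)
  then have IH: "length (P k) = n" "count_list (P k) True = k"
    by auto
  obtain j where j: "j < n" "\<not> P k ! j" "P (Suc k) = (P k)[j := True]"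
    using assms(1) Suc.prems unfolding monotone_path_def by (meson Suc_le_lessD)
  have "{i. i < n \<and> P (Suc k) ! i} = insert j {i. i < n \<and> P k ! i}"
    using j IH by (auto simp: nth_list_update)
  then have "card {i. i < n \<and> P (Suc k) ! i} = Suc (card {i. i < n \<and> P k ! i})"
    using j by simp
  then show ?case
    using IH j by (simp add: count_list_True_eq_card)
qed

lemma monotone_path_initial_segments: "monotone_path n (\<lambda>k. indicator_pt {..<k} n)"
  unfolding monotone_path_def
proof (intro conjI allI impI)
  show "indicator_pt {..<0} n = replicate n False" "indicator_pt {..<n} n = replicate n True"
    by (simp_all add: list_eq_iff_nth_eq)
  fix k assume "k < n"
  then show "\<exists>j<n. \<not> indicator_pt {..<k} n ! j \<and> indicator_pt {..<Suc k} n = (indicator_pt {..<k} n)[j := True]"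
    by (intro exI[of _ k]) (auto simp: list_eq_iff_nth_eq nth_list_update)
qed

text \<open>For symmetric f all monotone paths have the same alternation number, since the k-th point
  of every such path has weight k.\<close>

lemma alt_symmetric:
  assumes "symmetric_fun n f"
  shows "alt n f = card {k. k < n \<and> f (indicator_pt {..<k} n) \<noteq> f (indicator_pt {..<Suc k} n)}"
    (is "_ = card ?A")
proof -
  have "alt_num f n P = card ?A" if "monotone_path n P" for P
  proof -
    have "f (P k) = f (indicator_pt {..<k} n)" if "k \<le> n" for k
      using monotone_path_weight[OF \<open>monotone_path n P\<close> that] symmetric_fun_weight[OF assms, of "P k"]
      by simp
    then show ?thesis
      unfolding alt_num_def by (intro arg_cong[where f = card]) auto
  qed
  then have "{alt_num f n P | P. monotone_path n P} = {card ?A}"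
    using monotone_path_initial_segments by (auto intro!: exI[of _ "\<lambda>k. indicator_pt {..<k} n"])
  then show ?thesis
    unfolding alt_def by simp
qed

definition cube_slice :: "nat \<Rightarrow> nat \<Rightarrow> nat set set" where
  "cube_slice n k = {T. T \<subseteq> {..<n} \<and> card T = k}"

lemma finite_cube_slice [simp]: "finite (cube_slice n k)"
  unfolding cube_slice_def by (rule finite_subset[of _ "Pow {..<n}"]) auto

lemma card_cube_slice: "card (cube_slice n k) = n choose k"
  unfolding cube_slice_def using n_subsets[of "{..<n}" k] by simp

lemma symmetric_fun_cube_slice:
  assumes "symmetric_fun n f" "T \<in> cube_slice n k"
  shows "f (indicator_pt T n) = f (indicator_pt {..<k} n)"
  using assms symmetric_fun_weight[of n f "indicator_pt T n"] count_list_indicator_pt[of T n]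
  unfolding cube_slice_def by auto

lemma card_supersets:
  assumes "finite U" "S \<subseteq> U" "card S \<le> k"
  shows "card {T. T \<subseteq> U \<and> card T = k \<and> S \<subseteq> T} = (card U - card S) choose (k - card S)"
proof -
  have "finite S"
    using assms(1,2) finite_subset by blast
  have "{T. T \<subseteq> U \<and> card T = k \<and> S \<subseteq> T} = (\<lambda>V. V \<union> S) ` {V. V \<subseteq> U - S \<and> card V = k - card S}"
  proof (intro equalityI subsetI)
    fix T assume "T \<in> {T. T \<subseteq> U \<and> card T = k \<and> S \<subseteq> T}"
    then have T: "T \<subseteq> U" "card T = k" "S \<subseteq> T" "finite T"
      using assms(1) finite_subset by auto
    then have "T - S \<subseteq> U - S" "card (T - S) = k - card S" "T = (T - S) \<union> S"
      using \<open>finite S\<close> by (auto simp: card_Diff_subset)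
    then show "T \<in> (\<lambda>V. V \<union> S) ` {V. V \<subseteq> U - S \<and> card V = k - card S}"
      by blast
  next
    fix T assume "T \<in> (\<lambda>V. V \<union> S) ` {V. V \<subseteq> U - S \<and> card V = k - card S}"
    then obtain V where V: "V \<subseteq> U - S" "card V = k - card S" "T = V \<union> S" "finite V"
      using assms(1) finite_subset by auto
    have "card T = card V + card S"
      unfolding V(3) using V(1,4) \<open>finite S\<close> by (intro card_Un_disjoint) auto
    then have "card T = k"
      using V(2) assms(3) by simp
    then show "T \<in> {T. T \<subseteq> U \<and> card T = k \<and> S \<subseteq> T}"
      using V assms(2) by auto
  qed
  moreover have "inj_on (\<lambda>V. V \<union> S) {V. V \<subseteq> U - S \<and> card V = k - card S}"
    by (rule inj_onI) blast
  ultimately have "card {T. T \<subseteq> U \<and> card T = k \<and> S \<subseteq> T} = card {V. V \<subseteq> U - S \<and> card V = k - card S}"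
    by (simp add: card_image)
  also have "\<dots> = card (U - S) choose (k - card S)"
    using assms(1) by (intro n_subsets) simp
  finally show ?thesis
    using assms(2) \<open>finite S\<close> by (simp add: card_Diff_subset)
qed

lemma card_supersets_cube_slice:
  assumes "S \<subseteq> {..<n}" "k \<le> n"
  shows "card {T \<in> cube_slice n k. S \<subseteq> T} * (n choose card S) = (n choose k) * (k choose card S)"
proof (cases "card S \<le> k")
  case True
  have "{T \<in> cube_slice n k. S \<subseteq> T} = {T. T \<subseteq> {..<n} \<and> card T = k \<and> S \<subseteq> T}"
    by (auto simp: cube_slice_def)
  then have "card {T \<in> cube_slice n k. S \<subseteq> T} = (n - card S) choose (k - card S)"
    using card_supersets[of "{..<n}" S k] assms(1) True by simp
  then show ?thesis
    using choose_mult[OF True assms(2)] by (simp add: mult.commute)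
next
  case False
  have "\<not> S \<subseteq> T" if "T \<in> cube_slice n k" for T
  proof
    assume "S \<subseteq> T"
    then have "card S \<le> card T"
      using that by (intro card_mono) (auto simp: cube_slice_def intro: finite_subset)
    with False that show False
      by (simp add: cube_slice_def)
  qed
  then have no_supersets: "{T \<in> cube_slice n k. S \<subseteq> T} = {}"
    by blast
  show ?thesis
    unfolding no_supersets using False by simp
qed

lemma monomial_indicator_pt:
  assumes "T \<subseteq> {..<n}"
  shows "(\<Prod>i<n. cube_pt (indicator_pt T n) i ^ e i) = (if {i. i < n \<and> 0 < e i} \<subseteq> T then 1 else (0::real))"
proof (cases "{i. i < n \<and> 0 < e i} \<subseteq> T")
  case True
  then have "cube_pt (indicator_pt T n) i ^ e i = 1" if "i < n" for i
    using that by (cases "e i = 0") (auto simp: cube_pt_def)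
  then show ?thesis
    using True by simp
next
  case False
  then obtain i where "i < n" "0 < e i" "i \<notin> T"
    by auto
  then show ?thesis
    using False by (auto simp: cube_pt_def intro!: prod_zero)
qed

lemma sum_cube_slice_monomial:
  fixes e :: "nat \<Rightarrow> nat"
  assumes "k \<le> n"
  defines "s \<equiv> card {i. i < n \<and> 0 < e i}"
  shows "(\<Sum>T\<in>cube_slice n k. \<Prod>i<n. cube_pt (indicator_pt T n) i ^ e i)
    = real (n choose k) * real (k choose s) / real (n choose s)"
proof -
  let ?S = "{i. i < n \<and> 0 < e i}"
  have "?S \<subseteq> {..<n}"
    by auto
  then have "s \<le> card {..<n}"
    unfolding s_def by (rule card_mono[OF finite_lessThan])
  then have "s \<le> n"
    by simp
  have "(\<Sum>T\<in>cube_slice n k. \<Prod>i<n. cube_pt (indicator_pt T n) i ^ e i)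
      = (\<Sum>T\<in>cube_slice n k. if ?S \<subseteq> T then 1 else 0)"
    by (intro sum.cong refl monomial_indicator_pt) (simp add: cube_slice_def)
  also have "\<dots> = real (card {T \<in> cube_slice n k. ?S \<subseteq> T})"
    using sum.inter_filter[OF finite_cube_slice, of "\<lambda>_. 1 :: real" n k "\<lambda>T. ?S \<subseteq> T"] by simp
  also have "\<dots> = real (n choose k) * real (k choose s) / real (n choose s)"
  proof -
    have "card {T \<in> cube_slice n k. ?S \<subseteq> T} * (n choose s) = (n choose k) * (k choose s)"
      using card_supersets_cube_slice[OF \<open>?S \<subseteq> {..<n}\<close> assms(1)] unfolding s_def .
    then have "real (card {T \<in> cube_slice n k. ?S \<subseteq> T}) * real (n choose s) = real (n choose k) * real (k choose s)"
      by (simp only: of_nat_mult[symmetric])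
    moreover have "real (n choose s) \<noteq> 0"
      using \<open>s \<le> n\<close> by simp
    ultimately show ?thesis
      by (simp add: eq_divide_eq)
  qed
  finally show ?thesis .
qed

definition binomial_poly :: "nat \<Rightarrow> real poly" where
  "binomial_poly s = smult (1 / fact s) (\<Prod>j<s. [:- of_nat j, 1:])"

lemma poly_binomial_poly: "poly (binomial_poly s) (real k) = real (k choose s)"
  by (simp add: binomial_poly_def poly_prod binomial_gbinomial gbinomial_prod_rev atLeast0LessThan)

lemma degree_binomial_poly: "degree (binomial_poly s) \<le> s"
proof -
  have "degree (\<Prod>j<s. [:- of_nat j, 1 :: real:]) \<le> (\<Sum>j<s. degree [:- of_nat j, 1 :: real:])"
    using degree_prod_sum_le[of "{..<s}" "\<lambda>j. [:- of_nat j, 1 :: real:]"] by (simp add: o_def)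
  then show ?thesis
    unfolding binomial_poly_def by (simp add: degree_smult_le order_trans)
qed

text \<open>Minsky--Papert symmetrization: summing a polynomial over a slice of the cube leaves a
  univariate polynomial in the weight, because each monomial with support of size s contributes
  a multiple of (k choose s).\<close>

lemma symmetrization:
  assumes "poly_deg_le n D q"
  obtains R :: "real poly" where "degree R \<le> D"
    "\<And>k. k \<le> n \<Longrightarrow> real (n choose k) * poly R (real k) = (\<Sum>T\<in>cube_slice n k. q (cube_pt (indicator_pt T n)))"
proof -
  obtain M c where M: "finite M" "\<forall>e\<in>M. (\<Sum>i<n. e i) \<le> D"
    "\<forall>y. q y = (\<Sum>e\<in>M. c e * (\<Prod>i<n. y i ^ e i))"
    using assms unfolding poly_deg_le_def by blast
  define s where "s e = card {i. i < n \<and> 0 < e i}" for e :: "nat \<Rightarrow> nat"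
  define R where "R = (\<Sum>e\<in>M. smult (c e / real (n choose s e)) (binomial_poly (s e)))"
  have "degree R \<le> D"
    unfolding R_def
  proof (rule degree_sum_le[OF M(1)])
    fix e assume "e \<in> M"
    have "s e = (\<Sum>i | i < n \<and> 0 < e i. 1)"
      by (simp add: s_def)
    also have "\<dots> \<le> (\<Sum>i<n. e i)"
      by (rule order_trans[OF sum_mono sum_mono2]) auto
    finally show "degree (smult (c e / real (n choose s e)) (binomial_poly (s e))) \<le> D"
      using M(2) \<open>e \<in> M\<close> degree_binomial_poly[of "s e"] degree_smult_le by (meson order_trans)
  qed
  moreover have "real (n choose k) * poly R (real k) = (\<Sum>T\<in>cube_slice n k. q (cube_pt (indicator_pt T n)))"
    if "k \<le> n" for k
  proof -
    have "(\<Sum>T\<in>cube_slice n k. q (cube_pt (indicator_pt T n)))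
        = (\<Sum>e\<in>M. c e * (\<Sum>T\<in>cube_slice n k. \<Prod>i<n. cube_pt (indicator_pt T n) i ^ e i))"
      using M(3) by (simp add: sum.swap[of _ "cube_slice n k"] sum_distrib_left)
    also have "\<dots> = real (n choose k) * poly R (real k)"
      using that unfolding R_def
      by (simp add: sum_cube_slice_monomial s_def poly_sum poly_binomial_poly sum_distrib_left algebra_simps)
    finally show ?thesis
      by (rule sym)
  qed
  ultimately show ?thesis
    using that by blast
qed

text \<open>Squaring removes the sign of p: its square is at most 1/9 on f = 0 and at least 1 on
  f = 1, and these bounds survive averaging over a slice.\<close>

lemma symmetrized_square_bounds:
  assumes sym: "symmetric_fun n f" and deg: "poly_deg_le n d p" and approx: "nondet_approximates n f p"
  obtains R :: "real poly" where "degree R \<le> 2 * d"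
    "\<And>k. k \<le> n \<Longrightarrow> \<not> f (indicator_pt {..<k} n) \<Longrightarrow> poly R (real k) \<le> 1/9"
    "\<And>k. k \<le> n \<Longrightarrow> f (indicator_pt {..<k} n) \<Longrightarrow> poly R (real k) \<ge> 1"
proof -
  have "poly_deg_le n (d + d) (\<lambda>y. p y * p y)"
    by (rule poly_deg_le_mult[OF deg deg])
  then obtain R :: "real poly" where R: "degree R \<le> d + d" "\<And>k. k \<le> n \<Longrightarrow>
      real (n choose k) * poly R (real k) = (\<Sum>T\<in>cube_slice n k. p (cube_pt (indicator_pt T n)) * p (cube_pt (indicator_pt T n)))"
    by (rule symmetrization) blast
  have sq_le: "a * a \<le> 1/9" if "\<bar>a\<bar> \<le> 1/3" for a :: real
    using mult_mono[OF that that] by (simp add: abs_mult[symmetric])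
  have sq_ge: "a * a \<ge> 1" if "\<bar>a\<bar> \<ge> 1" for a :: real
    using mult_mono[OF that that] by (simp add: abs_mult[symmetric])
  have value_on_slice: "f (indicator_pt T n) = f (indicator_pt {..<k} n)" "length (indicator_pt T n) = n"
    if "T \<in> cube_slice n k" for T k
    using symmetric_fun_cube_slice[OF sym that] by simp_all
  show ?thesis
  proof (rule that)
    show "degree R \<le> 2 * d"
      using R(1) by simp
  next
    fix k assume "k \<le> n" "\<not> f (indicator_pt {..<k} n)"
    then have "real (n choose k) * poly R (real k) \<le> real (n choose k) * (1/9)"
      using approx value_on_slice sq_le sum_bounded_above[of "cube_slice n k" _ "1/9 :: real"]
      unfolding R(2)[OF \<open>k \<le> n\<close>] nondet_approximates_def card_cube_slice by auto
    then show "poly R (real k) \<le> 1/9"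
      using \<open>k \<le> n\<close> by simp
  next
    fix k assume "k \<le> n" "f (indicator_pt {..<k} n)"
    then have "real (n choose k) * 1 \<le> real (n choose k) * poly R (real k)"
      using approx value_on_slice sq_ge sum_bounded_below[of "cube_slice n k" "1 :: real"]
      unfolding R(2)[OF \<open>k \<le> n\<close>] nondet_approximates_def card_cube_slice by auto
    then show "poly R (real k) \<ge> 1"
      using \<open>k \<le> n\<close> by simp
  qed
qed

text \<open>Each sign change of g between consecutive integers k, k+1 yields a root in the open
  interval (k, k+1); these intervals are disjoint.\<close>

lemma card_sign_changes_le_degree:
  fixes g :: "real poly"
  assumes sign_change: "\<And>k. k \<in> A \<Longrightarrow> poly g (real k) * poly g (real (Suc k)) < 0"
  shows "card A \<le> degree g"
proof (cases "A = {}")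
  case True
  then show ?thesis by simp
next
  case False
  then have "g \<noteq> 0"
    using sign_change by fastforce
  have "\<exists>x. real k < x \<and> x < real k + 1 \<and> poly g x = 0" if "k \<in> A" for k
    using poly_IVT[OF _ sign_change[OF that]] by auto
  then obtain root where root: "\<And>k. k \<in> A \<Longrightarrow> real k < root k \<and> root k < real k + 1 \<and> poly g (root k) = 0"
    by metis
  have "strict_mono_on A root"
  proof (rule strict_mono_onI)
    fix a b assume "a \<in> A" "b \<in> A" "a < b"
    then have "real a + 1 \<le> real b"
      by simp
    then show "root a < root b"
      using root[OF \<open>a \<in> A\<close>] root[OF \<open>b \<in> A\<close>] by linarith
  qed
  then have "card A = card (root ` A)"
    by (simp add: card_image strict_mono_on_imp_inj_on)
  also have "\<dots> \<le> card {x. poly g x = 0}"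
    using root by (intro card_mono poly_roots_finite[OF \<open>g \<noteq> 0\<close>]) auto
  also have "\<dots> \<le> degree g"
    by (rule card_poly_roots_bound[OF \<open>g \<noteq> 0\<close>])
  finally show ?thesis .
qed

lemma alt_le_twice_degree:
  assumes sym: "symmetric_fun n f" and "poly_deg_le n d p" "nondet_approximates n f p"
  shows "alt n f \<le> 2 * d"
proof -
  obtain R :: "real poly" where R: "degree R \<le> 2 * d"
    "\<And>k. k \<le> n \<Longrightarrow> \<not> f (indicator_pt {..<k} n) \<Longrightarrow> poly R (real k) \<le> 1/9"
    "\<And>k. k \<le> n \<Longrightarrow> f (indicator_pt {..<k} n) \<Longrightarrow> poly R (real k) \<ge> 1"
    using symmetrized_square_bounds[OF assms] by blast
  define g where "g = R - [:1/2:]"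
  have "poly g (real k) * poly g (real (Suc k)) < 0"
    if "k < n" "f (indicator_pt {..<k} n) \<noteq> f (indicator_pt {..<Suc k} n)" for k
    using that R(2,3)[of k] R(2,3)[of "Suc k"] unfolding g_def
    by (cases "f (indicator_pt {..<k} n)") (auto simp: mult_pos_neg mult_neg_pos)
  then have "alt n f \<le> degree g"
    unfolding alt_symmetric[OF sym] by (intro card_sign_changes_le_degree) blast
  also have "\<dots> \<le> 2 * d"
    unfolding g_def using R(1) by (intro degree_diff_le) auto
  finally show ?thesis .
qed

theorem lemma3p15:
  fixes n :: nat and f :: "bool list \<Rightarrow> bool"
  assumes "symmetric_fun n f"
  shows "real (N_deg n f) \<ge> real (alt n f) / 2"
proof -
  obtain p where "poly_deg_le n (N_deg n f) p" "nondet_approximates n f p"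
    by (rule N_deg_witness)
  then have "alt n f \<le> 2 * N_deg n f"
    by (rule alt_le_twice_degree[OF assms])
  then show ?thesis
    by simp
qed

end
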